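(* There is an absolute constant $C<\infty$ such that for every $n\ge1$, $\|M_{\mathrm{Sen}(\mathcal S)}\|_{2\to2}\le C\,\|M_{\mathrm{Sen}(\mathcal N)}\|_{2\to2}$.
   Context: Let $\mathbb{I}^n=\{0,1\}^n$ with Hamming distance $d$, and $V=\mathbb{R}^{\mathbb{I}^n}$ with $\|f\|_2=(\sum_x f(x)^2)^{1/2}$. For $0\le k\le n$, $(S_kf)(x)=\binom{n}{k}^{-1}\sum_{y:\,d(x,y)=k}f(y)$. For a family $\mathcal A$ of linear operators on $V$, $(M_{\mathcal A}f)(x)=\sup_{A\in\mathcal A}(Af)(x)$. $\mathcal S=\{S_k\}_{k=0}^n$ and $\mathrm{Sen}(\mathcal S)_k=\frac{1}{k+1}\sum_{\ell=0}^kS_\ell$ for $0\le k\le n$. For real $t\ge0$, with $p=(1-e^{-t})/2$, the noise operator is $N_t=\sum_{k=0}^n\binom nk p^k(1-p)^{n-k}S_k$, and $\mathrm{Sen}(\mathcal N)=\{\mathrm{Sen}(\mathcal N)_T\}_{T\ge0}$ with $\mathrm{Sen}(\mathcal N)_T=\frac1T\int_0^TN_t\,dt$ for $T>0$ and $\mathrm{Sen}(\mathcal N)_0=N_0=$ identity (the limit as $T\downarrow0$). For a sublinear operator $M$, $\|M\|_{2\to2}=\sup_{f\ne0}\|Mf\|_2/\|f\|_2$. *)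

theory Defs
  imports "HOL-Analysis.Analysis"
begin

text \<open>The discrete cube {0,1}^n, realised as boolean lists of length n.
  Functions on the cube are functions bool list => real; only their values on
  the cube matter.\<close>

definition cube :: "nat \<Rightarrow> bool list set" where
  "cube n = {xs. length xs = n}"

definition hamming :: "bool list \<Rightarrow> bool list \<Rightarrow> nat" where
  "hamming xs ys = card {i. i < length xs \<and> xs ! i \<noteq> ys ! i}"

definition l2norm :: "nat \<Rightarrow> (bool list \<Rightarrow> real) \<Rightarrow> real" where
  "l2norm n f = sqrt (\<Sum>x\<in>cube n. (f x)^2)"

definition sph :: "nat \<Rightarrow> nat \<Rightarrow> (bool list \<Rightarrow> real) \<Rightarrow> bool list \<Rightarrow> real" where
  "sph n k f x = (\<Sum>y\<in>{y\<in>cube n. hamming x y = k}. f y) / real (n choose k)"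

definition senS :: "nat \<Rightarrow> nat \<Rightarrow> (bool list \<Rightarrow> real) \<Rightarrow> bool list \<Rightarrow> real" where
  "senS n k f x = (\<Sum>l\<le>k. sph n l f x) / real (k + 1)"

definition noise :: "nat \<Rightarrow> real \<Rightarrow> (bool list \<Rightarrow> real) \<Rightarrow> bool list \<Rightarrow> real" where
  "noise n t f x = (let p = (1 - exp (- t)) / 2 in
     \<Sum>k\<le>n. real (n choose k) * p ^ k * (1 - p) ^ (n - k) * sph n k f x)"

definition senN :: "nat \<Rightarrow> real \<Rightarrow> (bool list \<Rightarrow> real) \<Rightarrow> bool list \<Rightarrow> real" where
  "senN n T f x = (if T = 0 then f x else integral {0..T} (\<lambda>t. noise n t f x) / T)"

definition maxS :: "nat \<Rightarrow> (bool list \<Rightarrow> real) \<Rightarrow> bool list \<Rightarrow> real" where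
  "maxS n f x = (SUP k\<in>{0..n}. senS n k f x)"

definition maxN :: "nat \<Rightarrow> (bool list \<Rightarrow> real) \<Rightarrow> bool list \<Rightarrow> real" where
  "maxN n f x = (SUP T\<in>{0::real..}. senN n T f x)"

definition opnorm2 :: "nat \<Rightarrow> ((bool list \<Rightarrow> real) \<Rightarrow> bool list \<Rightarrow> real) \<Rightarrow> real" where
  "opnorm2 n M = (SUP f\<in>{f. l2norm n f \<noteq> 0}. l2norm n (M f) / l2norm n f)"

end

theory Submission
  imports Defs
begin

text \<open>For nonnegative g both averages are nonnegative combinations of the spherical averages
  S_l g: Sen(S)_k g gives weight 1/(k+1) to each l \<le> k, and Sen(N)_T g gives S_l g the weight
  (1/T) \<integral>_0^T b_l(t) dt, where b_l(t) is the Bin(n, p(t)) probability of l.  Since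
  d/dt P(Bin(n+1, p(t)) > l) = (n+1) b_l(t) e^-t/2, the integral of b_l is at least
  2 P(Bin(n+1, p(T)) > l)/(n+1).  Choosing T with p(T) = 4(k+1)/(n+1), that tail probability is
  at least 1/2 for l \<le> k, and T \<le> 16(k+1)/(n+1); hence Sen(S)_k g \<le> 16 Sen(N)_T g pointwise
  whenever 16(k+1) \<le> n+1.  For larger k, Sen(S)_k g is at most Sen(S)_m g for m \<approx> n/16 plus
  (\<Sum>_l S_l g)/(m+2), and since every S_l is an l^2 contraction the latter has norm at most
  16 \<parallel>g\<parallel>.  As \<parallel>M_Sen(N)\<parallel> \<ge> 1, the constant C = 32 works.\<close>

lemma finite_cube: "finite (cube n)"
proof -
  have "cube n = {xs. set xs \<subseteq> (UNIV::bool set) \<and> length xs = n}" by (auto simp: cube_def)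
  then show ?thesis using finite_lists_length_eq[of "UNIV::bool set" n] by simp
qed

lemma card_cube: "card (cube n) = 2^n"
proof -
  have "cube n = {xs. set xs \<subseteq> (UNIV::bool set) \<and> length xs = n}" by (auto simp: cube_def)
  then show ?thesis using card_lists_length_eq[of "UNIV::bool set" n] by simp
qed

lemma hamming_commute: "x \<in> cube n \<Longrightarrow> y \<in> cube n \<Longrightarrow> hamming x y = hamming y x"
  unfolding hamming_def cube_def by (metis (mono_tags, lifting) mem_Collect_eq)

lemma hamming_eq_0_iff: "x \<in> cube n \<Longrightarrow> y \<in> cube n \<Longrightarrow> hamming x y = 0 \<longleftrightarrow> x = y"
  unfolding hamming_def cube_def by (auto intro: nth_equalityI)

lemma card_hamming_sphere:
  assumes x: "x \<in> cube n"
  shows "card {y\<in>cube n. hamming x y = k} = n choose k"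
proof -
  let ?S = "{y\<in>cube n. hamming x y = k}"
  let ?T = "{B. B \<subseteq> {..<n} \<and> card B = k}"
  define flips where "flips y = {i. i < n \<and> x ! i \<noteq> y ! i}" for y
  define flip where "flip B = map (\<lambda>i. if i \<in> B then \<not> x ! i else x ! i) [0..<n]" for B
  have lx: "length x = n" using x by (simp add: cube_def)
  have "bij_betw flips ?S ?T"
  proof (rule bij_betw_byWitness[where f' = flip])
    show "\<forall>y\<in>?S. flip (flips y) = y"
      by (auto simp: flips_def flip_def cube_def intro!: nth_equalityI)
    show "\<forall>B\<in>?T. flips (flip B) = B"
      by (auto simp: flips_def flip_def)
    show "flips ` ?S \<subseteq> ?T"
      by (auto simp: flips_def hamming_def lx)
    show "flip ` ?T \<subseteq> ?S"
    proof
      fix y assume "y \<in> flip ` ?T"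
      then obtain B where B: "B \<in> ?T" and y: "y = flip B" by blast
      have "{i. i < length x \<and> x ! i \<noteq> y ! i} = B" using B by (auto simp: y flip_def lx)
      then show "y \<in> ?S" using B by (auto simp: y flip_def cube_def hamming_def)
    qed
  qed
  then have "card ?S = card ?T" by (rule bij_betw_same_card)
  also have "\<dots> = n choose k" using n_subsets[of "{..<n}" k] by simp
  finally show ?thesis .
qed

lemma l2norm_eq_L2_set: "l2norm n f = L2_set f (cube n)"
  unfolding l2norm_def L2_set_def ..

lemma l2norm_nonneg: "0 \<le> l2norm n f"
  unfolding l2norm_eq_L2_set by simp

lemma l2norm_mono: "(\<And>x. x \<in> cube n \<Longrightarrow> \<bar>f x\<bar> \<le> \<bar>g x\<bar>) \<Longrightarrow> l2norm n f \<le> l2norm n g"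
  unfolding l2norm_def
  by (intro real_sqrt_le_mono sum_mono) (metis abs_ge_zero power2_abs power_mono)

lemma l2norm_abs: "l2norm n (\<lambda>x. \<bar>f x\<bar>) = l2norm n f"
  unfolding l2norm_def by simp

lemma l2norm_add_le: "l2norm n (\<lambda>x. f x + g x) \<le> l2norm n f + l2norm n g"
  unfolding l2norm_eq_L2_set by (rule L2_set_triangle_ineq)

lemma l2norm_mult_left: "0 \<le> c \<Longrightarrow> l2norm n (\<lambda>x. c * f x) = c * l2norm n f"
  unfolding l2norm_eq_L2_set by (simp add: L2_set_right_distrib)

lemma l2norm_sum_le: "finite I \<Longrightarrow> l2norm n (\<lambda>x. \<Sum>l\<in>I. F l x) \<le> (\<Sum>l\<in>I. l2norm n (F l))"
proof (induction I rule: finite_induct)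
  case empty
  then show ?case unfolding l2norm_def by simp
next
  case (insert a I)
  have "l2norm n (\<lambda>x. \<Sum>l\<in>insert a I. F l x) = l2norm n (\<lambda>x. F a x + (\<Sum>l\<in>I. F l x))"
    using insert by simp
  also have "\<dots> \<le> l2norm n (F a) + l2norm n (\<lambda>x. \<Sum>l\<in>I. F l x)" by (rule l2norm_add_le)
  also have "\<dots> \<le> l2norm n (F a) + (\<Sum>l\<in>I. l2norm n (F l))" using insert by simp
  finally show ?case using insert by simp
qed

lemma abs_le_l2norm: "y \<in> cube n \<Longrightarrow> \<bar>f y\<bar> \<le> l2norm n f"
proof -
  assume y: "y \<in> cube n"
  have "(f y)^2 \<le> (\<Sum>x\<in>cube n. (f x)^2)"
    using y finite_cube by (intro member_le_sum) auto
  then show ?thesis unfolding l2norm_def by (metis real_sqrt_abs real_sqrt_le_mono)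
qed

lemma l2norm_le_const:
  assumes "0 \<le> c" "\<And>x. x \<in> cube n \<Longrightarrow> \<bar>f x\<bar> \<le> c"
  shows "l2norm n f \<le> sqrt (2^n) * c"
proof -
  have "l2norm n f \<le> l2norm n (\<lambda>_. c)" using assms by (intro l2norm_mono) auto
  also have "\<dots> = sqrt (2^n) * c" unfolding l2norm_eq_L2_set L2_set_constant card_cube using assms by simp
  finally show ?thesis .
qed

lemma l2norm_one_pos: "0 < l2norm n (\<lambda>_. 1)"
  unfolding l2norm_eq_L2_set L2_set_constant card_cube by simp

lemma sph_square_le:
  assumes x: "x \<in> cube n" and l: "l \<le> n"
  shows "(sph n l g x)^2 \<le> (\<Sum>y\<in>{y\<in>cube n. hamming x y = l}. (g y)^2) / real (n choose l)"
proof -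
  let ?S = "{y\<in>cube n. hamming x y = l}"
  have "(sph n l g x)^2 = (\<Sum>y\<in>?S. g y)^2 / (real (n choose l))^2"
    by (simp add: sph_def power_divide)
  also have "\<dots> \<le> ((\<Sum>y\<in>?S. (g y)^2) * real (n choose l)) / (real (n choose l))^2"
    using sum_squared_le_sum_of_squares[of g ?S] card_hamming_sphere[OF x]
    by (intro divide_right_mono) auto
  also have "\<dots> = (\<Sum>y\<in>?S. (g y)^2) / real (n choose l)"
    using l by (simp add: power2_eq_square)
  finally show ?thesis .
qed

lemma l2norm_sph_le:
  assumes l: "l \<le> n"
  shows "l2norm n (sph n l g) \<le> l2norm n g"
proof -
  define B where "B = real (n choose l)"
  have B: "B > 0" using l by (simp add: B_def)
  have sphere_count: "(\<Sum>x\<in>cube n. if hamming x y = l then (g y)^2 else 0) = (g y)^2 * B"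
    if y: "y \<in> cube n" for y
  proof -
    have "(\<Sum>x\<in>cube n. if hamming x y = l then (g y)^2 else 0)
        = (\<Sum>x\<in>cube n. if hamming y x = l then (g y)^2 else 0)"
      using hamming_commute[OF _ y] by (intro sum.cong) auto
    also have "\<dots> = (\<Sum>x\<in>{x\<in>cube n. hamming y x = l}. (g y)^2)"
      by (simp only: sum.inter_filter[OF finite_cube])
    finally show ?thesis using card_hamming_sphere[OF y] by (simp add: B_def)
  qed
  have "(\<Sum>x\<in>cube n. (sph n l g x)^2) \<le> (\<Sum>x\<in>cube n. (\<Sum>y\<in>{y\<in>cube n. hamming x y = l}. (g y)^2) / B)"
    using sph_square_le[OF _ l] by (intro sum_mono) (auto simp: B_def)
  also have "\<dots> = (\<Sum>x\<in>cube n. \<Sum>y\<in>cube n. if hamming x y = l then (g y)^2 else 0) / B"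
    by (simp add: sum_divide_distrib sum.inter_filter[OF finite_cube, symmetric])
  also have "\<dots> = (\<Sum>y\<in>cube n. \<Sum>x\<in>cube n. if hamming x y = l then (g y)^2 else 0) / B"
    by (subst sum.swap) simp
  also have "\<dots> = (\<Sum>y\<in>cube n. (g y)^2)"
    using B by (simp add: sphere_count sum_divide_distrib)
  finally show ?thesis unfolding l2norm_def by (rule real_sqrt_le_mono)
qed

definition bin_tail :: "nat \<Rightarrow> nat \<Rightarrow> real \<Rightarrow> real" where
  "bin_tail N l q = (\<Sum>j\<in>{Suc l..N}. real (N choose j) * q^j * (1-q)^(N-j))"

lemma bin_tail_at_0: "bin_tail N l 0 = 0"
  unfolding bin_tail_def by (intro sum.neutral) auto

lemma bin_tail_antimono: "0 \<le> q \<Longrightarrow> q \<le> 1 \<Longrightarrow> l \<le> k \<Longrightarrow> bin_tail N k q \<le> bin_tail N l q"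
  unfolding bin_tail_def by (intro sum_mono2) auto

lemma has_real_derivative_bin_tail:
  assumes "l \<le> n"
  shows "(bin_tail (Suc n) l has_real_derivative
           real (Suc n) * real (n choose l) * q^l * (1-q)^(n-l)) (at q)"
  using assms
proof (induction l rule: inc_induct)
  case base
  have "bin_tail (Suc n) n = (\<lambda>q. q ^ Suc n)" by (rule ext) (simp add: bin_tail_def)
  then show ?case using DERIV_pow[of "Suc n" q] by simp
next
  case (step l)
  define e where "e = n - Suc l"
  define C where "C = real (Suc n choose Suc l)"
  have e: "n - l = Suc e" using step.hyps by (simp add: e_def)
  have split: "bin_tail (Suc n) l = (\<lambda>q. C * (q^Suc l * (1-q)^Suc e) + bin_tail (Suc n) (Suc l) q)"
  proof (rule ext)
    fix q
    have "{Suc l..Suc n} = insert (Suc l) {Suc (Suc l)..Suc n}" using step.hyps by auto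
    then show "bin_tail (Suc n) l q = C * (q^Suc l * (1-q)^Suc e) + bin_tail (Suc n) (Suc l) q"
      unfolding bin_tail_def C_def using e by (simp add: mult.assoc)
  qed
  have absorb_l: "real (Suc l) * C = real (Suc n) * real (n choose l)"
    using Suc_times_binomial[of l n] unfolding C_def by (metis of_nat_mult)
  have absorb_e: "real (Suc e) * C = real (Suc n) * real (n choose Suc l)"
    using binomial_absorb_comp[of "Suc n" "Suc l"] e unfolding C_def by (metis diff_Suc_1 diff_Suc_Suc of_nat_mult)
  have d1: "((\<lambda>q. q^Suc l) has_real_derivative real (Suc l) * q^l) (at q)"
    using DERIV_pow[of "Suc l" q] by simp
  have d2: "((\<lambda>q. (1-q)^Suc e) has_real_derivative - (real (Suc e) * (1-q)^e)) (at q)"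
  proof -
    have "((\<lambda>x. x^Suc e) has_real_derivative real (Suc e) * (1-q)^e) (at (1-q))"
      using DERIV_pow[of "Suc e" "1-q"] by simp
    moreover have "((\<lambda>q. 1 - q) has_real_derivative -1) (at q)"
      by (auto intro!: derivative_eq_intros)
    ultimately show ?thesis using DERIV_chain2 by fastforce
  qed
  have IH: "(bin_tail (Suc n) (Suc l) has_real_derivative
              real (Suc n) * real (n choose Suc l) * q^Suc l * (1-q)^e) (at q)"
    using step.IH unfolding e_def .
  have "(bin_tail (Suc n) l has_real_derivative
      C * (real (Suc l) * q^l * (1-q)^Suc e + - (real (Suc e) * (1-q)^e) * q^Suc l)
      + real (Suc n) * real (n choose Suc l) * q^Suc l * (1-q)^e) (at q)"
    unfolding split by (intro DERIV_add DERIV_cmult DERIV_mult d1 d2 IH)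
  moreover have "C * (real (Suc l) * q^l * (1-q)^Suc e + - (real (Suc e) * (1-q)^e) * q^Suc l)
      = (real (Suc l) * C) * q^l * (1-q)^Suc e - (real (Suc e) * C) * q^Suc l * (1-q)^e"
    by (simp add: algebra_simps)
  ultimately show ?case unfolding absorb_l absorb_e e by simp
qed

lemma sum_atMost_le_of_doubling:
  fixes a :: "nat \<Rightarrow> real"
  assumes doubling: "\<And>j. j \<le> k \<Longrightarrow> 2 * a j \<le> a (Suc j)" and "0 \<le> a 0"
  shows "(\<Sum>j\<le>k. a j) \<le> a (Suc k)"
  using doubling
proof (induction k)
  case 0
  then show ?case using \<open>0 \<le> a 0\<close> by force
next
  case (Suc k)
  then have "(\<Sum>j\<le>Suc k. a j) \<le> 2 * a (Suc k)" by simp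
  also have "\<dots> \<le> a (Suc (Suc k))" using Suc.prems by simp
  finally show ?case .
qed

lemma binomial_pmf_Suc:
  assumes "j < N"
  shows "real (N choose Suc j) * q^Suc j * (1-q)^(N - Suc j) * (real (Suc j) * (1-q))
       = real (N choose j) * q^j * (1-q)^(N-j) * (real (N-j) * q)"
proof -
  obtain n where N: "N = Suc n" using assms by (cases N) auto
  have "Suc j * (N choose Suc j) = (N - j) * (N choose j)"
    using Suc_times_binomial[of j n] binomial_absorb_comp[of N j] by (simp add: N)
  then have c: "real (Suc j) * real (N choose Suc j) = real (N - j) * real (N choose j)"
    by (metis of_nat_mult)
  have e: "N - j = Suc (N - Suc j)" using assms by simp
  have "real (N choose Suc j) * q^Suc j * (1-q)^(N - Suc j) * (real (Suc j) * (1-q))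
      = (real (Suc j) * real (N choose Suc j)) * q^Suc j * (1-q)^Suc (N - Suc j)"
    by (simp add: algebra_simps)
  also have "\<dots> = (real (N - j) * real (N choose j)) * q^Suc j * (1-q)^(N - j)"
    by (simp only: c e)
  also have "\<dots> = real (N choose j) * q^j * (1-q)^(N-j) * (real (N-j) * q)"
    by (simp add: algebra_simps)
  finally show ?thesis .
qed

text \<open>Below the mean, the binomial probabilities at least double from one index to the next.\<close>

lemma bin_tail_ge_half:
  assumes kN: "16 * (k+1) \<le> N"
  shows "1/2 \<le> bin_tail N k (4 * real (k+1) / real N)"
proof -
  define q where "q = 4 * real (k+1) / real N"
  define \<beta> where "\<beta> j = real (N choose j) * q^j * (1-q)^(N-j)" for j
  have N: "16 * real (k+1) \<le> real N" using kN by linarith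
  have Nq: "real N * q = 4 * real (k+1)" using N by (simp add: q_def)
  have q: "0 \<le> q" "q \<le> 1/4" using N by (auto simp: q_def field_simps)
  have \<beta>_nonneg: "0 \<le> \<beta> j" for j using q by (simp add: \<beta>_def)
  have doubling: "2 * \<beta> j \<le> \<beta> (Suc j)" if j: "j \<le> k" for j
  proof -
    have jN: "j < N" using j kN by simp
    have "real N \<le> 2 * real (N - j)" using j kN by simp
    then have "real N * q \<le> 2 * (real (N - j) * q)" using q(1) by (metis mult.assoc mult_right_mono)
    then have "2 * real (Suc j) \<le> real (N - j) * q"
      using Nq j by (simp del: of_nat_diff)
    moreover have "2 * real (Suc j) * (1-q) \<le> 2 * real (Suc j)"
      using q by (intro mult_left_le) auto
    ultimately have "2 * real (Suc j) * (1-q) \<le> real (N - j) * q" by linarith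
    then have "\<beta> j * (2 * real (Suc j) * (1-q)) \<le> \<beta> j * (real (N - j) * q)"
      using \<beta>_nonneg by (rule mult_left_mono)
    also have "\<dots> = \<beta> (Suc j) * (real (Suc j) * (1-q))"
      unfolding \<beta>_def by (rule binomial_pmf_Suc[OF jN, symmetric])
    finally have "(2 * \<beta> j) * (real (Suc j) * (1-q)) \<le> \<beta> (Suc j) * (real (Suc j) * (1-q))"
      by (simp add: algebra_simps)
    moreover have "0 < real (Suc j) * (1-q)" using q by simp
    ultimately show ?thesis by (rule mult_right_le_imp_le)
  qed
  have "(\<Sum>j\<le>k. \<beta> j) \<le> \<beta> (Suc k)"
    using doubling \<beta>_nonneg by (rule sum_atMost_le_of_doubling)
  also have "\<dots> \<le> (\<Sum>j\<in>{Suc k..N}. \<beta> j)"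
    using kN \<beta>_nonneg by (intro member_le_sum) auto
  finally have low: "(\<Sum>j\<le>k. \<beta> j) \<le> (\<Sum>j\<in>{Suc k..N}. \<beta> j)" .
  have "{..N} = {..k} \<union> {Suc k..N}" using kN by auto
  then have "(\<Sum>j\<le>N. \<beta> j) = (\<Sum>j\<le>k. \<beta> j) + (\<Sum>j\<in>{Suc k..N}. \<beta> j)"
    by (simp add: sum.union_disjoint)
  moreover have "(\<Sum>j\<le>N. \<beta> j) = 1"
    using binomial_ring[of q "1-q" N] by (simp add: \<beta>_def)
  moreover have "(\<Sum>j\<in>{Suc k..N}. \<beta> j) = bin_tail N k q"
    by (simp add: bin_tail_def \<beta>_def)
  ultimately show ?thesis using low by (simp add: q_def)
qed

definition flip_prob :: "real \<Rightarrow> real" where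
  "flip_prob t = (1 - exp (- t)) / 2"

definition noise_weight :: "nat \<Rightarrow> nat \<Rightarrow> real \<Rightarrow> real" where
  "noise_weight n l t = real (n choose l) * flip_prob t ^ l * (1 - flip_prob t) ^ (n - l)"

lemma noise_eq_sum_noise_weight: "noise n t f x = (\<Sum>l\<le>n. noise_weight n l t * sph n l f x)"
  unfolding noise_def noise_weight_def flip_prob_def Let_def by simp

lemma flip_prob_bounds: "0 \<le> t \<Longrightarrow> 0 \<le> flip_prob t \<and> flip_prob t \<le> 1/2"
  unfolding flip_prob_def by auto

lemma noise_weight_nonneg: "0 \<le> t \<Longrightarrow> 0 \<le> noise_weight n l t"
  using flip_prob_bounds[of t] unfolding noise_weight_def by auto

lemma sum_noise_weight: "(\<Sum>l\<le>n. noise_weight n l t) = 1"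
  using binomial_ring[of "flip_prob t" "1 - flip_prob t" n] unfolding noise_weight_def by simp

lemma continuous_on_noise_weight: "continuous_on S (noise_weight n l)"
  unfolding noise_weight_def flip_prob_def by (intro continuous_intros) auto

lemma integral_noise_weight_ge:
  assumes l: "l \<le> n" and T: "0 \<le> T"
  shows "2 * bin_tail (Suc n) l (flip_prob T) / real (Suc n) \<le> integral {0..T} (noise_weight n l)"
proof -
  define \<Phi> where "\<Phi> t = bin_tail (Suc n) l (flip_prob t) / real (Suc n)" for t
  define \<phi> where "\<phi> t = noise_weight n l t * (exp (- t) / 2)" for t
  have "(\<Phi> has_real_derivative \<phi> t) (at t within {0..T})" for t
  proof -
    have "(flip_prob has_real_derivative exp (- t) / 2) (at t within {0..T})"
      unfolding flip_prob_def by (auto intro!: derivative_eq_intros)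
    from DERIV_chain2[OF has_real_derivative_bin_tail[OF l] this]
    have "(\<Phi> has_real_derivative
        real (Suc n) * real (n choose l) * flip_prob t ^ l * (1 - flip_prob t) ^ (n - l)
          * (exp (- t) / 2) / real (Suc n)) (at t within {0..T})"
      unfolding \<Phi>_def by (rule DERIV_cdivide)
    moreover have "real (Suc n) * real (n choose l) * flip_prob t ^ l * (1 - flip_prob t) ^ (n - l)
        * (exp (- t) / 2) / real (Suc n) = \<phi> t"
      unfolding \<phi>_def noise_weight_def by (simp add: field_simps)
    ultimately show ?thesis by simp
  qed
  then have "(\<phi> has_integral (\<Phi> T - \<Phi> 0)) {0..T}"
    using T by (intro fundamental_theorem_of_calculus)
      (auto simp: has_real_derivative_iff_has_vector_derivative[symmetric])
  then have "((\<lambda>t. 2 * \<phi> t) has_integral 2 * (\<Phi> T - \<Phi> 0)) {0..T}"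
    by (rule has_integral_mult_right)
  moreover have "(noise_weight n l has_integral integral {0..T} (noise_weight n l)) {0..T}"
    by (intro integrable_integral integrable_continuous_interval continuous_on_noise_weight)
  moreover have "2 * \<phi> t \<le> noise_weight n l t" if "t \<in> {0..T}" for t
    using that noise_weight_nonneg[of t n l]
      mult_left_mono[of "exp (- t)" 1 "noise_weight n l t"] by (simp add: \<phi>_def)
  ultimately have "2 * (\<Phi> T - \<Phi> 0) \<le> integral {0..T} (noise_weight n l)"
    by (rule has_integral_le)
  then show ?thesis by (simp add: \<Phi>_def flip_prob_def bin_tail_at_0)
qed

lemma senN_eq_sum_integral_noise_weight:
  assumes T: "0 < T"
  shows "senN n T g x = (\<Sum>l\<le>n. integral {0..T} (noise_weight n l) * sph n l g x) / T"
proof -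
  have "integral {0..T} (\<lambda>t. noise n t g x)
      = integral {0..T} (\<lambda>t. \<Sum>l\<le>n. noise_weight n l t * sph n l g x)"
    by (simp add: noise_eq_sum_noise_weight)
  also have "\<dots> = (\<Sum>l\<le>n. integral {0..T} (noise_weight n l) * sph n l g x)"
    by (subst integral_sum)
      (auto intro!: integrable_continuous_interval continuous_intros continuous_on_noise_weight)
  finally show ?thesis using T unfolding senN_def by simp
qed

lemma minus_ln_one_minus_le:
  fixes x :: real
  assumes "0 \<le> x" "x \<le> 1/2"
  shows "- ln (1 - x) \<le> 2 * x"
proof -
  have "- ln (1 - x) = ln (1 / (1 - x))" using assms by (simp add: ln_div)
  also have "\<dots> \<le> 1 / (1 - x) - 1" using assms by (intro ln_le_minus_one) auto
  also have "\<dots> = x / (1 - x)" using assms by (simp add: field_simps)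
  also have "\<dots> \<le> x / (1/2)" using assms by (intro divide_left_mono) auto
  finally show ?thesis by simp
qed

definition noise_time :: "nat \<Rightarrow> nat \<Rightarrow> real" where
  "noise_time n k = - ln (1 - 8 * real (k+1) / real (Suc n))"

lemma noise_time:
  assumes "16 * (k+1) \<le> Suc n"
  shows "flip_prob (noise_time n k) = 4 * real (k+1) / real (Suc n)"
    and "0 < noise_time n k" "noise_time n k \<le> 16 * real (k+1) / real (Suc n)"
proof -
  define x where "x = 8 * real (k+1) / real (Suc n)"
  have "16 * real (k+1) \<le> real (Suc n)" using assms by linarith
  then have x: "0 < x" "x \<le> 1/2" by (auto simp: x_def field_simps)
  have T: "noise_time n k = - ln (1 - x)" by (simp add: noise_time_def x_def)
  show "flip_prob (noise_time n k) = 4 * real (k+1) / real (Suc n)"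
    using x unfolding T flip_prob_def by (simp add: x_def field_simps)
  show "0 < noise_time n k" using x unfolding T by simp
  show "noise_time n k \<le> 16 * real (k+1) / real (Suc n)"
    using minus_ln_one_minus_le[of x] x unfolding T by (simp add: x_def)
qed

lemma noise_weight_average_ge:
  assumes l: "l \<le> k" and kn: "16 * (k+1) \<le> Suc n"
  shows "1 / (16 * real (k+1)) \<le> integral {0..noise_time n k} (noise_weight n l) / noise_time n k"
proof -
  define T where "T = noise_time n k"
  define N where "N = real (Suc n)"
  have N: "0 < N" by (simp add: N_def)
  have T: "0 < T" "N * T \<le> 16 * real (k+1)"
    using noise_time[OF kn] N by (auto simp: T_def N_def field_simps)
  have "1/2 \<le> bin_tail (Suc n) k (flip_prob T)"
    using bin_tail_ge_half[OF kn] noise_time(1)[OF kn] by (simp add: T_def)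
  also have "\<dots> \<le> bin_tail (Suc n) l (flip_prob T)"
    using l flip_prob_bounds[of T] T by (intro bin_tail_antimono) auto
  finally have "1 / N \<le> integral {0..T} (noise_weight n l)"
    using integral_noise_weight_ge[of l n T] l kn T N by (simp add: N_def field_simps)
  moreover have "1 / (16 * real (k+1)) \<le> (1 / N) / T"
    using T N by (simp add: field_simps)
  ultimately show ?thesis unfolding T_def[symmetric] using T by (smt (verit) divide_right_mono)
qed

lemma sph_nonneg: "(\<And>y. 0 \<le> g y) \<Longrightarrow> 0 \<le> sph n l g x"
  unfolding sph_def by (intro divide_nonneg_nonneg sum_nonneg) auto

lemma senS_le_senN:
  assumes g: "\<And>y. 0 \<le> g y" and kn: "16 * (k+1) \<le> Suc n"
  shows "senS n k g x \<le> 16 * senN n (noise_time n k) g x"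
proof -
  define T where "T = noise_time n k"
  have T: "0 < T" using noise_time(2)[OF kn] by (simp add: T_def)
  have "(\<Sum>l\<le>k. 1 / (16 * real (k+1)) * sph n l g x) = 1 / (16 * real (k+1)) * (\<Sum>l\<le>k. sph n l g x)"
    by (simp add: sum_distrib_left)
  then have "senS n k g x = 16 * (\<Sum>l\<le>k. 1 / (16 * real (k+1)) * sph n l g x)"
    unfolding senS_def by (simp add: field_simps)
  also have "\<dots> \<le> 16 * (\<Sum>l\<le>k. integral {0..T} (noise_weight n l) / T * sph n l g x)"
    using noise_weight_average_ge[OF _ kn] sph_nonneg[OF g]
    by (intro mult_left_mono sum_mono mult_right_mono) (auto simp: T_def)
  also have "\<dots> \<le> 16 * (\<Sum>l\<le>n. integral {0..T} (noise_weight n l) / T * sph n l g x)"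
    using kn T sph_nonneg[OF g] noise_weight_nonneg
    by (intro mult_left_mono sum_mono2)
      (auto intro!: mult_nonneg_nonneg divide_nonneg_nonneg integral_nonneg
        integrable_continuous_interval continuous_on_noise_weight)
  also have "\<dots> = 16 * senN n T g x"
    using T by (simp add: senN_eq_sum_integral_noise_weight sum_divide_distrib)
  finally show ?thesis by (simp add: T_def)
qed

text \<open>Crude bounds ensuring that the suprema defining maxN and opnorm2 are taken over bounded
  sets, so that they are genuine least upper bounds rather than junk values of Sup.\<close>

definition l1norm :: "nat \<Rightarrow> (bool list \<Rightarrow> real) \<Rightarrow> real" where
  "l1norm n f = (\<Sum>y\<in>cube n. \<bar>f y\<bar>)"

lemma l1norm_nonneg: "0 \<le> l1norm n f"
  unfolding l1norm_def by (simp add: sum_nonneg)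

lemma l1norm_le_l2norm: "l1norm n f \<le> 2^n * l2norm n f"
proof -
  have "l1norm n f \<le> (\<Sum>y\<in>cube n. l2norm n f)"
    unfolding l1norm_def by (intro sum_mono abs_le_l2norm)
  then show ?thesis by (simp add: card_cube)
qed

lemma abs_sph_le_l1norm:
  assumes "k \<le> n"
  shows "\<bar>sph n k f x\<bar> \<le> l1norm n f"
proof -
  let ?S = "{y\<in>cube n. hamming x y = k}"
  have "\<bar>\<Sum>y\<in>?S. f y\<bar> \<le> l1norm n f"
    unfolding l1norm_def using finite_cube
    by (intro order_trans[OF sum_abs] sum_mono2) auto
  moreover have "1 \<le> real (n choose k)" using assms by (simp add: Suc_leI)
  then have "\<bar>sph n k f x\<bar> \<le> \<bar>\<Sum>y\<in>?S. f y\<bar>"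
    unfolding sph_def using assms divide_left_mono[of 1 "real (n choose k)" "\<bar>\<Sum>y\<in>?S. f y\<bar>"] by simp
  ultimately show ?thesis by simp
qed

lemma abs_noise_le_l1norm:
  assumes "0 \<le> t"
  shows "\<bar>noise n t f x\<bar> \<le> l1norm n f"
proof -
  have "\<bar>noise n t f x\<bar> \<le> (\<Sum>l\<le>n. noise_weight n l t * \<bar>sph n l f x\<bar>)"
    unfolding noise_eq_sum_noise_weight using noise_weight_nonneg[OF assms]
    by (intro order_trans[OF sum_abs]) (simp add: abs_mult)
  also have "\<dots> \<le> (\<Sum>l\<le>n. noise_weight n l t * l1norm n f)"
    using noise_weight_nonneg[OF assms] abs_sph_le_l1norm by (intro sum_mono mult_left_mono) auto
  also have "\<dots> = l1norm n f" by (simp add: sum_distrib_right[symmetric] sum_noise_weight)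
  finally show ?thesis .
qed

lemma senN_le: "0 \<le> T \<Longrightarrow> senN n T f x \<le> \<bar>f x\<bar> + l1norm n f"
proof (cases "T = 0")
  case True
  then show ?thesis using l1norm_nonneg[of n f] unfolding senN_def by simp
next
  case False
  assume T: "0 \<le> T"
  have "integral {0..T} (\<lambda>t. noise n t f x) \<le> integral {0..T} (\<lambda>t. l1norm n f)"
    using abs_noise_le_l1norm
    by (intro integral_le integrable_continuous_interval)
      (auto simp: abs_le_iff noise_eq_sum_noise_weight intro!: continuous_intros continuous_on_noise_weight)
  then have "integral {0..T} (\<lambda>t. noise n t f x) / T \<le> l1norm n f"
    using T False by (simp add: divide_le_eq mult.commute)
  then show ?thesis using False l1norm_nonneg[of n f] unfolding senN_def by simp
qed

lemma bdd_above_senN: "bdd_above ((\<lambda>T. senN n T f x) ` {0..})"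
  using senN_le by (intro bdd_aboveI2[of _ _ "\<bar>f x\<bar> + l1norm n f"]) auto

lemma senN_le_maxN: "0 \<le> T \<Longrightarrow> senN n T f x \<le> maxN n f x"
  unfolding maxN_def by (intro cSUP_upper bdd_above_senN) auto

lemma le_maxN: "f x \<le> maxN n f x"
  using senN_le_maxN[of 0 n f x] unfolding senN_def by simp

lemma abs_maxN_le: "x \<in> cube n \<Longrightarrow> \<bar>maxN n f x\<bar> \<le> (1 + 2^n) * l2norm n f"
proof -
  assume x: "x \<in> cube n"
  have "maxN n f x \<le> \<bar>f x\<bar> + l1norm n f"
    unfolding maxN_def by (intro cSUP_least senN_le) auto
  then have "\<bar>maxN n f x\<bar> \<le> \<bar>f x\<bar> + l1norm n f"
    using le_maxN[of f x n] l1norm_nonneg[of n f] by (auto simp: abs_le_iff)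
  also have "\<dots> \<le> l2norm n f + 2^n * l2norm n f"
    using abs_le_l2norm[OF x] l1norm_le_l2norm by (rule add_mono)
  finally show ?thesis by (simp add: algebra_simps)
qed

lemma l2norm_maxN_le: "l2norm n (maxN n f) \<le> sqrt (2^n) * (1 + 2^n) * l2norm n f"
  using l2norm_le_const[of "(1 + 2^n) * l2norm n f"] abs_maxN_le l2norm_nonneg
  by (simp add: mult.assoc)

lemma bdd_above_opnorm2_maxN:
  "bdd_above ((\<lambda>f. l2norm n (maxN n f) / l2norm n f) ` {f. l2norm n f \<noteq> 0})"
proof (rule bdd_aboveI2)
  fix f assume "f \<in> {f. l2norm n f \<noteq> 0}"
  then have "0 < l2norm n f" using l2norm_nonneg[of n f] by simp
  then show "l2norm n (maxN n f) / l2norm n f \<le> sqrt (2^n) * (1 + 2^n)"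
    using l2norm_maxN_le[of n f] by (simp add: divide_le_eq)
qed

lemma l2norm_maxN_le_opnorm2: "l2norm n (maxN n f) \<le> opnorm2 n (maxN n) * l2norm n f"
proof (cases "l2norm n f = 0")
  case True
  then show ?thesis using l2norm_maxN_le[of n f] by simp
next
  case False
  then have "0 < l2norm n f" using l2norm_nonneg[of n f] by simp
  moreover have "l2norm n (maxN n f) / l2norm n f \<le> opnorm2 n (maxN n)"
    unfolding opnorm2_def using False by (intro cSUP_upper bdd_above_opnorm2_maxN) auto
  ultimately show ?thesis by (simp add: divide_le_eq)
qed

lemma one_le_opnorm2_maxN: "1 \<le> opnorm2 n (maxN n)"
proof -
  let ?one = "\<lambda>_::bool list. 1::real"
  have "l2norm n ?one \<le> l2norm n (maxN n ?one)"
    using le_maxN[of ?one] by (intro l2norm_mono) (smt (verit))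
  then have "1 \<le> l2norm n (maxN n ?one) / l2norm n ?one" using l2norm_one_pos[of n] by simp
  also have "\<dots> \<le> opnorm2 n (maxN n)"
    unfolding opnorm2_def using l2norm_one_pos[of n] by (intro cSUP_upper bdd_above_opnorm2_maxN) auto
  finally show ?thesis .
qed

lemma sph_0: "x \<in> cube n \<Longrightarrow> sph n 0 f x = f x"
proof -
  assume x: "x \<in> cube n"
  then have "{y\<in>cube n. hamming x y = 0} = {x}" using hamming_eq_0_iff[OF x] by auto
  then show ?thesis unfolding sph_def by simp
qed

lemma senS_0: "x \<in> cube n \<Longrightarrow> senS n 0 f x = f x"
  unfolding senS_def by (simp add: sph_0)

lemma senS_le_maxS: "k \<le> n \<Longrightarrow> senS n k f x \<le> maxS n f x"
  unfolding maxS_def by (intro cSUP_upper bdd_above_finite) auto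

lemma senS_mono: "(\<And>y. f y \<le> g y) \<Longrightarrow> senS n k f x \<le> senS n k g x"
  unfolding senS_def sph_def by (intro divide_right_mono sum_mono) auto

lemma abs_maxS_le: "x \<in> cube n \<Longrightarrow> \<bar>maxS n f x\<bar> \<le> maxS n (\<lambda>y. \<bar>f y\<bar>) x"
proof -
  assume x: "x \<in> cube n"
  have "senS n k f x \<le> maxS n (\<lambda>y. \<bar>f y\<bar>) x" if "k \<in> {0..n}" for k
  proof -
    have "senS n k f x \<le> senS n k (\<lambda>y. \<bar>f y\<bar>) x" by (rule senS_mono) simp
    also have "\<dots> \<le> maxS n (\<lambda>y. \<bar>f y\<bar>) x" using that by (intro senS_le_maxS) simp
    finally show ?thesis .
  qed
  then have "maxS n f x \<le> maxS n (\<lambda>y. \<bar>f y\<bar>) x"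
    unfolding maxS_def[of n f] by (intro cSUP_least) auto
  moreover have "f x \<le> maxS n f x" "\<bar>f x\<bar> \<le> maxS n (\<lambda>y. \<bar>f y\<bar>) x"
    using senS_le_maxS[of 0 n _ x] senS_0[OF x] by (metis zero_le)+
  ultimately show ?thesis by linarith
qed

text \<open>The largest k with 16 (k + 1) \<le> n + 1; for n < 15 the truncated subtraction makes it 0.\<close>

definition cutoff :: "nat \<Rightarrow> nat" where
  "cutoff n = Suc n div 16 - 1"

definition sph_tail :: "nat \<Rightarrow> (bool list \<Rightarrow> real) \<Rightarrow> bool list \<Rightarrow> real" where
  "sph_tail n g x = (\<Sum>l\<le>n. sph n l g x) / real (cutoff n + 2)"

lemma senS_le_maxN:
  assumes g: "\<And>y. 0 \<le> g y" and x: "x \<in> cube n" and k: "k \<le> cutoff n"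
  shows "senS n k g x \<le> 16 * maxN n g x"
proof (cases "k = 0")
  case True
  then show ?thesis using senS_0[OF x, of g] le_maxN[of g x n] g[of x] by simp
next
  case False
  then have "k + 1 \<le> Suc n div 16" using k unfolding cutoff_def by simp
  moreover have "16 * (Suc n div 16) \<le> Suc n" by simp
  ultimately have kn: "16 * (k+1) \<le> Suc n" by (meson le_trans mult_le_mono2)
  have "senS n k g x \<le> 16 * senN n (noise_time n k) g x" using g kn by (rule senS_le_senN)
  also have "\<dots> \<le> 16 * maxN n g x"
    using senN_le_maxN noise_time(2)[OF kn] by (simp add: less_imp_le)
  finally show ?thesis .
qed

lemma senS_le_maxN_add_sph_tail:
  assumes g: "\<And>y. 0 \<le> g y" and x: "x \<in> cube n" and k: "k \<le> n"
  shows "senS n k g x \<le> 16 * maxN n g x + sph_tail n g x"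
proof (cases "k \<le> cutoff n")
  case True
  moreover have "0 \<le> sph_tail n g x"
    unfolding sph_tail_def by (intro divide_nonneg_nonneg sum_nonneg sph_nonneg g) auto
  ultimately show ?thesis using senS_le_maxN[of g, OF g x True] by linarith
next
  case False
  define m where "m = cutoff n"
  have mk: "m < k" using False by (simp add: m_def)
  have s: "0 \<le> sph n l g x" for l using sph_nonneg[OF g] .
  have "{..k} = {..m} \<union> {Suc m..k}" using mk by auto
  then have "(\<Sum>l\<le>k. sph n l g x) = (\<Sum>l\<le>m. sph n l g x) + (\<Sum>l\<in>{Suc m..k}. sph n l g x)"
    by (simp add: sum.union_disjoint)
  then have "senS n k g x
      = (\<Sum>l\<le>m. sph n l g x) / real (k+1) + (\<Sum>l\<in>{Suc m..k}. sph n l g x) / real (k+1)"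
    unfolding senS_def by (simp add: add_divide_distrib)
  also have "\<dots> \<le> (\<Sum>l\<le>m. sph n l g x) / real (m+1) + (\<Sum>l\<le>n. sph n l g x) / real (m+2)"
  proof (rule add_mono)
    show "(\<Sum>l\<le>m. sph n l g x) / real (k+1) \<le> (\<Sum>l\<le>m. sph n l g x) / real (m+1)"
      using mk s by (intro divide_left_mono sum_nonneg) auto
    have "(\<Sum>l\<in>{Suc m..k}. sph n l g x) \<le> (\<Sum>l\<le>n. sph n l g x)"
      using k s by (intro sum_mono2) auto
    then show "(\<Sum>l\<in>{Suc m..k}. sph n l g x) / real (k+1) \<le> (\<Sum>l\<le>n. sph n l g x) / real (m+2)"
      using mk s by (intro frac_le sum_nonneg) auto
  qed
  also have "\<dots> = senS n m g x + sph_tail n g x"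
    unfolding senS_def sph_tail_def m_def by simp
  also have "\<dots> \<le> 16 * maxN n g x + sph_tail n g x"
    using senS_le_maxN[of g, OF g x, of m] by (simp add: m_def)
  finally show ?thesis .
qed

lemma l2norm_sph_tail_le: "l2norm n (sph_tail n g) \<le> 16 * l2norm n g"
proof -
  define c where "c = 1 / real (cutoff n + 2)"
  have c: "0 \<le> c" by (simp add: c_def)
  have "l2norm n (sph_tail n g) = l2norm n (\<lambda>x. c * (\<Sum>l\<le>n. sph n l g x))"
    unfolding sph_tail_def c_def by simp
  also have "\<dots> = c * l2norm n (\<lambda>x. \<Sum>l\<le>n. sph n l g x)"
    using c by (rule l2norm_mult_left)
  also have "\<dots> \<le> c * (\<Sum>l\<le>n. l2norm n (sph n l g))"
    using c by (intro mult_left_mono l2norm_sum_le) auto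
  also have "\<dots> \<le> c * (\<Sum>l\<le>n. l2norm n g)"
    using c by (intro mult_left_mono sum_mono l2norm_sph_le) auto
  also have "\<dots> = real (Suc n) / real (cutoff n + 2) * l2norm n g" by (simp add: c_def)
  also have "\<dots> \<le> 16 * l2norm n g"
  proof (rule mult_right_mono[OF _ l2norm_nonneg])
    have "Suc n div 16 + 1 \<le> cutoff n + 2" unfolding cutoff_def by simp
    moreover have "Suc n \<le> 16 * (Suc n div 16 + 1)" by simp
    ultimately have "Suc n \<le> 16 * (cutoff n + 2)" by (meson le_trans mult_le_mono2)
    then have "real (Suc n) \<le> 16 * real (cutoff n + 2)" by linarith
    then show "real (Suc n) / real (cutoff n + 2) \<le> 16" by (simp add: divide_le_eq)
  qed
  finally show ?thesis .
qed

lemma l2norm_maxS_le: "l2norm n (maxS n f) \<le> 32 * opnorm2 n (maxN n) * l2norm n f"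
proof -
  define g where "g = (\<lambda>y. \<bar>f y\<bar>)"
  have g: "0 \<le> g y" for y by (simp add: g_def)
  have "l2norm n (maxS n f) \<le> l2norm n (\<lambda>x. 16 * maxN n g x + sph_tail n g x)"
  proof (rule l2norm_mono)
    fix x assume x: "x \<in> cube n"
    have "\<bar>maxS n f x\<bar> \<le> maxS n g x" using abs_maxS_le[OF x, of f] by (simp add: g_def)
    also have "\<dots> \<le> 16 * maxN n g x + sph_tail n g x"
      unfolding maxS_def by (intro cSUP_least senS_le_maxN_add_sph_tail[OF g x]) auto
    finally show "\<bar>maxS n f x\<bar> \<le> \<bar>16 * maxN n g x + sph_tail n g x\<bar>" by simp
  qed
  also have "\<dots> \<le> 16 * l2norm n (maxN n g) + l2norm n (sph_tail n g)"
    using l2norm_add_le[where f = "\<lambda>x. 16 * maxN n g x" and g = "sph_tail n g"] by (simp add: l2norm_mult_left)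
  also have "\<dots> \<le> 16 * (opnorm2 n (maxN n) * l2norm n g) + 16 * (opnorm2 n (maxN n) * l2norm n g)"
  proof -
    have "l2norm n g \<le> opnorm2 n (maxN n) * l2norm n g"
      using mult_right_mono[OF one_le_opnorm2_maxN l2norm_nonneg] by simp
    then show ?thesis using l2norm_maxN_le_opnorm2 l2norm_sph_tail_le by (smt (verit))
  qed
  also have "\<dots> = 32 * opnorm2 n (maxN n) * l2norm n f"
    using l2norm_abs[of n f] by (simp add: g_def)
  finally show ?thesis .
qed

theorem proposition2:
  shows "\<exists>C::real. \<forall>n::nat. n \<ge> 1 \<longrightarrow> opnorm2 n (maxS n) \<le> C * opnorm2 n (maxN n)"
proof (intro exI[of _ 32] allI impI)
  fix n :: nat
  have "l2norm n (maxS n f) / l2norm n f \<le> 32 * opnorm2 n (maxN n)" if "l2norm n f \<noteq> 0" for f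
    using that l2norm_nonneg[of n f] l2norm_maxS_le[of n f] by (simp add: divide_le_eq)
  moreover have "{f. l2norm n f \<noteq> 0} \<noteq> {}" using l2norm_one_pos[of n] by force
  ultimately show "opnorm2 n (maxS n) \<le> 32 * opnorm2 n (maxN n)"
    unfolding opnorm2_def[of n "maxS n"] by (intro cSUP_least) auto
qed

end
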